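(* Let $p,q$ be distinct atoms and $\varphi := \Box(p\land q)\to[\ddagger(p\land q)](\Box p\lor\Box q)$. Then $\varphi$ is true at every world of every model under the uniform semantics $\models_u$, but there is an $\mathsf{S5}$ model (relation an equivalence relation) and a world $w$ in it at which $\varphi$ is false under the dependent semantics $\models_d$. Consequently the logic of valid formulas under $\models_u$ differs from that under $\models_d$, and this remains so when both are restricted to the class of $\mathsf{S5}$ models.
   Context: Fix a countable non-empty set $\mathit{At}$ of atoms. Formulas are built from $\top$, atoms, $\lnot$, $\land$, $\Box$ and, for each propositional $\pi$, the operator $[\ddagger\pi]$. A model is $\mathcal{M}=\langle W,R,V\rangle$, $W\neq\varnothing$, $R\subseteq W\times W$, $V:\mathit{At}\to\mathcal{P}(W)$; both satisfaction relations $\models_u,\models_d$ interpret atoms, Booleans and $\Box$ in the standard Kripke way. A literal is an atom or its negation; a clause is a finite set $D$ of literals read as $\bigvee D$, tautological if it contains $p$ and $\lnot p$ for some $p$. For propositional $\pi$, $\mathcal{C}(\pi)$ is the set of non-tautological clauses $D$ with $\models\pi\to\bigvee D$ and no $D'\subsetneq D$ with $\models\pi\to\bigvee D'$. (E.g. $\mathcal{C}(p\land q)=\{\{p\},\{q\}\}$, $\mathcal{C}(\lnot(p\land q))=\{\{\lnot p,\lnot q\}\}$.) Uniform semantics: for non-tautological clauses $D_1,D_2$, $\mathcal{M}^{(D_1,D_2)}_u=\langle W',R',V'\rangle$ has $W'=W\times\{0,1,2\}$, $(w,i)R'(v,j)$ iff $wRv$, $(w,0)\in V'(p)$ iff $w\in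 V(p)$, and for $i\in\{1,2\}$: $(w,i)\in V'(p)$ iff $\lnot p\in D_i$, or $\{p,\lnot p\}\cap D_i=\varnothing$ and $w\in V(p)$. $\mathcal{M},w\models_u[\ddagger\pi]\psi$ iff for all $D_1\in\mathcal{C}(\pi)$, $D_2\in\mathcal{C}(\lnot\pi)$, $\mathcal{M}^{(D_1,D_2)}_u,(w,0)\models_u\psi$. Dependent semantics: for functions $f_1:W\to\mathcal{C}(\pi)$, $f_2:W\to\mathcal{C}(\lnot\pi)$, $\mathcal{M}^{(f_1,f_2)}_d=\langle W'',R'',V''\rangle$ has $W''=W\times\{0,1,2\}$, $(w,i)R''(v,j)$ iff $wRv$, $(w,0)\in V''(p)$ iff $w\in V(p)$, and for $i\in\{1,2\}$: $(w,i)\in V''(p)$ iff $\lnot p\in f_i(w)$, or $\{p,\lnot p\}\cap f_i(w)=\varnothing$ and $w\in V(p)$. $\mathcal{M},w\models_d[\ddagger\pi]\psi$ iff for all $f_1:W\to\mathcal{C}(\pi)$ and all $f_2:W\to\mathcal{C}(\lnot\pi)$, $\mathcal{M}^{(f_1,f_2)}_d,(w,0)\models_d\psi$. *)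

theory Defs
  imports Main "HOL-Library.Countable"
begin

datatype 'a pf = PTop | PAtom 'a | PNeg "'a pf" | PAnd "'a pf" "'a pf"

datatype 'a fm = Top | Atom 'a | Neg "'a fm" | And "'a fm" "'a fm" | Box "'a fm"
  | Upd "'a pf" "'a fm"

definition Or :: "'a fm \<Rightarrow> 'a fm \<Rightarrow> 'a fm" where
  "Or a b = Neg (And (Neg a) (Neg b))"

definition Imp :: "'a fm \<Rightarrow> 'a fm \<Rightarrow> 'a fm" where
  "Imp a b = Neg (And a (Neg b))"

fun peval :: "('a \<Rightarrow> bool) \<Rightarrow> 'a pf \<Rightarrow> bool" where
  "peval v PTop = True"
| "peval v (PAtom p) = v p"
| "peval v (PNeg a) = (\<not> peval v a)"
| "peval v (PAnd a b) = (peval v a \<and> peval v b)"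

text \<open>A literal is (atom, polarity): (p, True) is p, (p, False) is not p.
  A clause is a finite set of literals, read disjunctively.\<close>
type_synonym 'a clause = "('a \<times> bool) set"

definition tautological :: "'a clause \<Rightarrow> bool" where
  "tautological D \<longleftrightarrow> (\<exists>p. (p, True) \<in> D \<and> (p, False) \<in> D)"

definition entails_clause :: "'a pf \<Rightarrow> 'a clause \<Rightarrow> bool" where
  "entails_clause \<pi> D \<longleftrightarrow> (\<forall>v. peval v \<pi> \<longrightarrow> (\<exists>(p, b) \<in> D. v p = b))"

definition clauses :: "'a pf \<Rightarrow> 'a clause set" ("\<C>") where
  "\<C> \<pi> = {D. finite D \<and> \<not> tautological D \<and> entails_clause \<pi> D
              \<and> \<not> (\<exists>D'. D' \<subset> D \<and> entails_clause \<pi> D')}"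

type_synonym ('w, 'a) model = "'w set \<times> ('w \<times> 'w) set \<times> ('a \<Rightarrow> 'w set)"

definition is_model :: "('w, 'a) model \<Rightarrow> bool" where
  "is_model M \<longleftrightarrow> (case M of (W, R, V) \<Rightarrow>
     W \<noteq> {} \<and> R \<subseteq> W \<times> W \<and> (\<forall>p. V p \<subseteq> W))"

definition is_S5 :: "('w, 'a) model \<Rightarrow> bool" where
  "is_S5 M \<longleftrightarrow> (case M of (W, R, V) \<Rightarrow> equiv W R)"

text \<open>To interpret the update operators, whose models have world set W x {0,1,2}
  (nested arbitrarily deep), we internally work with worlds of type 'w x nat list:
  the pair of world x and index i in {0,1,2} is represented by (fst x, i # snd x).
  This is a bijective copy of W x {0,1,2}.\<close>
type_synonym 'w iw = "'w \<times> nat list"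

definition cp :: "'w iw \<Rightarrow> nat \<Rightarrow> 'w iw" where
  "cp x i = (fst x, i # snd x)"

definition copy_val :: "('w iw, 'a) model \<Rightarrow> 'a clause \<Rightarrow> 'a \<Rightarrow> 'w iw \<Rightarrow> bool" where
  "copy_val M D p w \<longleftrightarrow> (case M of (W, R, V) \<Rightarrow>
      (p, False) \<in> D \<or> ((p, False) \<notin> D \<and> (p, True) \<notin> D \<and> w \<in> V p))"

definition upd_d :: "('w iw, 'a) model \<Rightarrow> ('w iw \<Rightarrow> 'a clause) \<Rightarrow> ('w iw \<Rightarrow> 'a clause)
                     \<Rightarrow> ('w iw, 'a) model" where
  "upd_d M f1 f2 = (case M of (W, R, V) \<Rightarrow>
     ({cp w i | w i. w \<in> W \<and> i < 3},
      {(cp w i, cp v j) | w v i j. (w, v) \<in> R \<and> i < 3 \<and> j < 3},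
      (\<lambda>p. {cp w 0 | w. w \<in> W \<and> w \<in> V p}
          \<union> {cp w 1 | w. w \<in> W \<and> copy_val M (f1 w) p w}
          \<union> {cp w 2 | w. w \<in> W \<and> copy_val M (f2 w) p w})))"

definition upd_u :: "('w iw, 'a) model \<Rightarrow> 'a clause \<Rightarrow> 'a clause \<Rightarrow> ('w iw, 'a) model" where
  "upd_u M D1 D2 = upd_d M (\<lambda>_. D1) (\<lambda>_. D2)"

fun sat_u :: "('w iw, 'a) model \<Rightarrow> 'w iw \<Rightarrow> 'a fm \<Rightarrow> bool" where
  "sat_u M w Top = True"
| "sat_u M w (Atom p) = (w \<in> snd (snd M) p)"
| "sat_u M w (Neg a) = (\<not> sat_u M w a)"
| "sat_u M w (And a b) = (sat_u M w a \<and> sat_u M w b)"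
| "sat_u M w (Box a) = (\<forall>v. (w, v) \<in> fst (snd M) \<longrightarrow> sat_u M v a)"
| "sat_u M w (Upd \<pi> a) = (\<forall>D1 \<in> \<C> \<pi>. \<forall>D2 \<in> \<C> (PNeg \<pi>). sat_u (upd_u M D1 D2) (cp w 0) a)"

fun sat_d :: "('w iw, 'a) model \<Rightarrow> 'w iw \<Rightarrow> 'a fm \<Rightarrow> bool" where
  "sat_d M w Top = True"
| "sat_d M w (Atom p) = (w \<in> snd (snd M) p)"
| "sat_d M w (Neg a) = (\<not> sat_d M w a)"
| "sat_d M w (And a b) = (sat_d M w a \<and> sat_d M w b)"
| "sat_d M w (Box a) = (\<forall>v. (w, v) \<in> fst (snd M) \<longrightarrow> sat_d M v a)"
| "sat_d M w (Upd \<pi> a) = (\<forall>f1 f2. (\<forall>x \<in> fst M. f1 x \<in> \<C> \<pi>) \<longrightarrow>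
        (\<forall>x \<in> fst M. f2 x \<in> \<C> (PNeg \<pi>)) \<longrightarrow> sat_d (upd_d M f1 f2) (cp w 0) a)"

text \<open>Satisfaction in an arbitrary model (worlds of any type 'w), via the
  isomorphic copy w |-> (w, []).\<close>
definition lift :: "('w, 'a) model \<Rightarrow> ('w iw, 'a) model" where
  "lift M = (case M of (W, R, V) \<Rightarrow>
     ((\<lambda>w. (w, [])) ` W, (\<lambda>(w, v). ((w, []), (v, []))) ` R, (\<lambda>p. (\<lambda>w. (w, [])) ` V p)))"

definition usat :: "('w, 'a) model \<Rightarrow> 'w \<Rightarrow> 'a fm \<Rightarrow> bool" where
  "usat M w \<phi> = sat_u (lift M) (w, []) \<phi>"

definition dsat :: "('w, 'a) model \<Rightarrow> 'w \<Rightarrow> 'a fm \<Rightarrow> bool" where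
  "dsat M w \<phi> = sat_d (lift M) (w, []) \<phi>"

definition logic_u :: "'w itself \<Rightarrow> bool \<Rightarrow> 'a fm set" where
  "logic_u _ s5 = {\<phi>. \<forall>M :: ('w, 'a) model. is_model M \<and> (s5 \<longrightarrow> is_S5 M) \<longrightarrow>
                        (\<forall>w \<in> fst M. usat M w \<phi>)}"

definition logic_d :: "'w itself \<Rightarrow> bool \<Rightarrow> 'a fm set" where
  "logic_d _ s5 = {\<phi>. \<forall>M :: ('w, 'a) model. is_model M \<and> (s5 \<longrightarrow> is_S5 M) \<longrightarrow>
                        (\<forall>w \<in> fst M. dsat M w \<phi>)}"

end

theory Submission
  imports Defs
begin

text \<open>Updating with a clause falsifies it at the new copies, and the minimal clauses are
  \<open>\<C>(p \<and> q) = {{p}, {q}}\<close> and \<open>\<C>(\<not>(p \<and> q)) = {{\<not>p, \<not>q}}\<close>. Under the uniform semantics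
  one clause of \<open>\<C>(p \<and> q)\<close> is chosen for all worlds, so it falsifies only one of \<open>p\<close>, \<open>q\<close>
  everywhere, and the other atom stays necessary after the update. The dependent semantics may
  choose \<open>{p}\<close> at one world and \<open>{q}\<close> at another; in a two-world cluster where \<open>p\<close> and \<open>q\<close>
  hold everywhere this refutes both \<open>\<box>p\<close> and \<open>\<box>q\<close>.\<close>

lemma clauses_eq_if_entailing_subset:
  assumes "D \<in> \<C> \<pi>" "D' \<subseteq> D" "entails_clause \<pi> D'"
  shows "D = D'"
  using assms by (auto simp: clauses_def)

lemma clauses_conj_atoms_cases:
  assumes "D \<in> \<C> (PAnd (PAtom p) (PAtom q))"
  shows "D = {(p, True)} \<or> D = {(q, True)}"
proof -
  have nt: "\<not> tautological D" and en: "entails_clause (PAnd (PAtom p) (PAtom q)) D"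
    using assms by (auto simp: clauses_def)
  have "(p, True) \<in> D \<or> (q, True) \<in> D"
  proof (rule ccontr)
    assume no_pos: "\<not> ?thesis"
    \<comment> \<open>falsifies every literal of the non-tautological \<open>D\<close>, yet satisfies \<open>p \<and> q\<close>\<close>
    let ?v = "(\<lambda>x. (x, False) \<in> D)(p := True, q := True)"
    have "peval ?v (PAnd (PAtom p) (PAtom q))"
      by simp
    with en obtain a b where "(a, b) \<in> D" "?v a = b"
      unfolding entails_clause_def by blast
    then show False
      using no_pos nt unfolding tautological_def by (cases "a = p"; cases "a = q"; cases b) auto
  qed
  moreover have "entails_clause (PAnd (PAtom p) (PAtom q)) {(r, True)}" if "r = p \<or> r = q" for r
    using that by (auto simp: entails_clause_def)
  ultimately show ?thesis
    using clauses_eq_if_entailing_subset[OF assms] by blast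
qed

lemma clauses_neg_conj_atoms_cases:
  assumes "D \<in> \<C> (PNeg (PAnd (PAtom p) (PAtom q)))"
  shows "D = {(p, False), (q, False)}"
proof -
  have nt: "\<not> tautological D" and en: "entails_clause (PNeg (PAnd (PAtom p) (PAtom q))) D"
    using assms by (auto simp: clauses_def)
  have "(r, False) \<in> D" if r: "r = p \<or> r = q" for r
  proof (rule ccontr)
    assume no_neg: "(r, False) \<notin> D"
    let ?v = "(\<lambda>x. (x, False) \<in> D)(r := False)"
    have "peval ?v (PNeg (PAnd (PAtom p) (PAtom q)))"
      using r by auto
    with en obtain a b where "(a, b) \<in> D" "?v a = b"
      unfolding entails_clause_def by blast
    then show False
      using no_neg nt unfolding tautological_def by (cases "a = r"; cases b) auto
  qed
  then have "{(p, False), (q, False)} \<subseteq> D"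
    by blast
  moreover have "entails_clause (PNeg (PAnd (PAtom p) (PAtom q))) {(p, False), (q, False)}"
    by (auto simp: entails_clause_def)
  ultimately show ?thesis
    by (rule clauses_eq_if_entailing_subset[OF assms])
qed

lemma clauses_conj_atoms:
  "\<C> (PAnd (PAtom p) (PAtom q)) = {{(p, True)}, {(q, True)}}"
proof -
  have "{(r, True)} \<in> \<C> (PAnd (PAtom p) (PAtom q))" if "r = p \<or> r = q" for r
    using that unfolding clauses_def tautological_def entails_clause_def
    by (auto simp: subset_singleton_iff)
  then show ?thesis
    using clauses_conj_atoms_cases[of _ p q] by blast
qed

lemma clauses_neg_conj_atoms:
  assumes "p \<noteq> q"
  shows "\<C> (PNeg (PAnd (PAtom p) (PAtom q))) = {{(p, False), (q, False)}}"
proof -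
  have "\<not> entails_clause (PNeg (PAnd (PAtom p) (PAtom q))) D"
    if "D \<subset> {(p, False), (q, False)}" for D
  proof -
    obtain r where "r = p \<or> r = q" "D \<subseteq> {(r, False)}"
      using \<open>D \<subset> _\<close> by auto
    then show ?thesis
      using assms by (auto simp: entails_clause_def intro!: exI[of _ "\<lambda>x. x = r"])
  qed
  then have "{(p, False), (q, False)} \<in> \<C> (PNeg (PAnd (PAtom p) (PAtom q)))"
    using assms unfolding clauses_def tautological_def by (auto simp: entails_clause_def)
  then show ?thesis
    using clauses_neg_conj_atoms_cases[of _ p q] by blast
qed

lemma cp_eq_iff: "cp w i = cp v j \<longleftrightarrow> w = v \<and> i = j"
  by (cases w; cases v) (auto simp: cp_def)

lemma copy_val_iff:
  "copy_val M D r w \<longleftrightarrow> (r, False) \<in> D \<or> ((r, True) \<notin> D \<and> w \<in> snd (snd M) r)"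
  by (cases M) (auto simp: copy_val_def)

lemma is_model_lift: "is_model M \<Longrightarrow> is_model (lift M)"
  by (cases M) (auto simp: is_model_def lift_def)

lemma upd_d_successors_cp0:
  "(cp w 0, y) \<in> fst (snd (upd_d (W, R, V) f1 f2)) \<longleftrightarrow> (\<exists>v j. y = cp v j \<and> (w, v) \<in> R \<and> j < 3)"
  unfolding upd_d_def by (simp del: split_paired_Ex add: cp_eq_iff)

lemma upd_d_val_cp:
  assumes "v \<in> W"
  shows "cp v j \<in> snd (snd (upd_d (W, R, V) f1 f2)) r \<longleftrightarrow>
    (j = 0 \<and> v \<in> V r) \<or> (j = 1 \<and> copy_val (W, R, V) (f1 v) r v) \<or> (j = 2 \<and> copy_val (W, R, V) (f2 v) r v)"
  using assms unfolding upd_d_def by (simp del: split_paired_Ex add: cp_eq_iff)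

lemma sat_d_upd_d_Box_Atom:
  assumes "R \<subseteq> W \<times> W"
  shows "sat_d (upd_d (W, R, V) f1 f2) (cp w 0) (Box (Atom r)) \<longleftrightarrow>
    (\<forall>v. (w, v) \<in> R \<longrightarrow> v \<in> V r \<and> copy_val (W, R, V) (f1 v) r v \<and> copy_val (W, R, V) (f2 v) r v)"
proof -
  have "sat_d (upd_d (W, R, V) f1 f2) (cp w 0) (Box (Atom r)) \<longleftrightarrow>
    (\<forall>v. (w, v) \<in> R \<longrightarrow> (\<forall>j < 3. cp v j \<in> snd (snd (upd_d (W, R, V) f1 f2)) r))"
    unfolding sat_d.simps upd_d_successors_cp0 by blast
  also have "\<dots> \<longleftrightarrow>
    (\<forall>v. (w, v) \<in> R \<longrightarrow> v \<in> V r \<and> copy_val (W, R, V) (f1 v) r v \<and> copy_val (W, R, V) (f2 v) r v)"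
  proof -
    have "(\<forall>j < 3. cp v j \<in> snd (snd (upd_d (W, R, V) f1 f2)) r) \<longleftrightarrow>
      v \<in> V r \<and> copy_val (W, R, V) (f1 v) r v \<and> copy_val (W, R, V) (f2 v) r v" if "v \<in> W" for v
      unfolding numeral_3_eq_3 All_less_Suc upd_d_val_cp[OF that] by auto
    then show ?thesis
      using assms by blast
  qed
  finally show ?thesis .
qed

definition box_conj_update_formula :: "'a \<Rightarrow> 'a \<Rightarrow> 'a fm" where
  "box_conj_update_formula p q =
     Imp (Box (And (Atom p) (Atom q)))
         (Upd (PAnd (PAtom p) (PAtom q)) (Or (Box (Atom p)) (Box (Atom q))))"

lemma sat_u_box_conj_update_formula:
  assumes "p \<noteq> q" and "is_model N"
  shows "sat_u N x (box_conj_update_formula p q)"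
proof -
  obtain W R V where N: "N = (W, R, V)"
    using prod_cases3 by blast
  have R: "R \<subseteq> W \<times> W"
    using \<open>is_model N\<close> by (simp add: N is_model_def)
  have "sat_u (upd_u N D1 D2) (cp x 0) (Or (Box (Atom p)) (Box (Atom q)))"
    if box_conj: "sat_u N x (Box (And (Atom p) (Atom q)))"
      and D1: "D1 \<in> \<C> (PAnd (PAtom p) (PAtom q))"
      and D2: "D2 \<in> \<C> (PNeg (PAnd (PAtom p) (PAtom q)))" for D1 D2
  proof -
    have box: "\<forall>v. (x, v) \<in> R \<longrightarrow> v \<in> V p \<and> v \<in> V q"
      using box_conj unfolding N by simp
    obtain r where r: "r = p \<or> r = q" "(r, True) \<notin> D1" "(r, True) \<notin> D2"
      using D1 D2 \<open>p \<noteq> q\<close> clauses_conj_atoms[of p q] clauses_neg_conj_atoms[of p q] by auto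
    then have "sat_d (upd_u N D1 D2) (cp x 0) (Box (Atom r))"
      using box unfolding N upd_u_def sat_d_upd_d_Box_Atom[OF R] by (auto simp: copy_val_iff)
    then show ?thesis
      using r by (auto simp: Or_def)
  qed
  then show ?thesis
    unfolding box_conj_update_formula_def Imp_def sat_u.simps(3,4,6) by blast
qed

lemma usat_box_conj_update_formula:
  "p \<noteq> q \<Longrightarrow> is_model M \<Longrightarrow> usat M w (box_conj_update_formula p q)"
  by (simp add: usat_def sat_u_box_conj_update_formula is_model_lift)

definition two_world_cluster :: "(nat, 'a) model" where
  "two_world_cluster = ({0, 1}, {0, 1} \<times> {0, 1}, \<lambda>_. {0, 1})"

lemma is_model_two_world_cluster: "is_model two_world_cluster"
  by (simp add: two_world_cluster_def is_model_def)

lemma is_S5_two_world_cluster: "is_S5 two_world_cluster"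
  by (auto simp: two_world_cluster_def is_S5_def equiv_def refl_on_def sym_def trans_def)

lemma not_dsat_box_conj_update_formula:
  assumes "p \<noteq> q"
  shows "\<not> dsat two_world_cluster 0 (box_conj_update_formula p q)"
proof -
  obtain W R V where M: "lift (two_world_cluster :: (nat, 'a) model) = (W, R, V)"
    using prod_cases3 by blast
  have W: "W = {(0, []), (1, [])}" and R: "R = W \<times> W" and V: "\<And>r. V r = W"
    using M by (auto simp: lift_def two_world_cluster_def)
  define f1 :: "nat iw \<Rightarrow> 'a clause" where
    "f1 x = (if fst x = 0 then {(p, True)} else {(q, True)})" for x
  define f2 :: "nat iw \<Rightarrow> 'a clause" where
    "f2 x = {(p, False), (q, False)}" for x
  have "\<not> sat_d (upd_d (W, R, V) f1 f2) (cp (0, []) 0) (Box (Atom r))" if "r = p \<or> r = q" for r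
    using that \<open>p \<noteq> q\<close> unfolding sat_d_upd_d_Box_Atom[OF equalityD1[OF R]]
    by (auto simp: W R copy_val_iff f1_def f2_def)
  then have "\<not> sat_d (upd_d (W, R, V) f1 f2) (cp (0, []) 0) (Or (Box (Atom p)) (Box (Atom q)))"
    unfolding Or_def sat_d.simps(3,4) by blast
  moreover have "f1 x \<in> \<C> (PAnd (PAtom p) (PAtom q))"
    and "f2 x \<in> \<C> (PNeg (PAnd (PAtom p) (PAtom q)))" for x
    using \<open>p \<noteq> q\<close> by (simp_all add: f1_def f2_def clauses_conj_atoms clauses_neg_conj_atoms)
  ultimately have "\<not> sat_d (W, R, V) (0, []) (Upd (PAnd (PAtom p) (PAtom q)) (Or (Box (Atom p)) (Box (Atom q))))"
    unfolding sat_d.simps(6) by blast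
  moreover have "sat_d (W, R, V) (0, []) (Box (And (Atom p) (Atom q)))"
    by (simp add: W R V)
  ultimately show ?thesis
    unfolding dsat_def M box_conj_update_formula_def Imp_def sat_d.simps(3,4) by blast
qed

lemma logic_u_ne_logic_d:
  fixes M :: "('w, 'a) model"
  assumes "\<phi> \<in> logic_u TYPE('w) s5" and "is_model M" "s5 \<longrightarrow> is_S5 M"
    and "w \<in> fst M" "\<not> dsat M w \<phi>"
  shows "logic_u TYPE('w) s5 \<noteq> (logic_d TYPE('w) s5 :: 'a fm set)"
proof
  assume eq: "logic_u TYPE('w) s5 = (logic_d TYPE('w) s5 :: 'a fm set)"
  have "\<phi> \<in> logic_d TYPE('w) s5"
    by (subst eq[symmetric]) (rule assms(1))
  then have "is_model M \<and> (s5 \<longrightarrow> is_S5 M) \<longrightarrow> (\<forall>w \<in> fst M. dsat M w \<phi>)"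
    unfolding logic_d_def mem_Collect_eq by (rule spec)
  with assms(2-) show False
    by blast
qed

theorem proposition9:
  fixes p q :: "'a :: countable"
  assumes "p \<noteq> q"
  defines "\<phi> \<equiv> Imp (Box (And (Atom p) (Atom q)))
                    (Upd (PAnd (PAtom p) (PAtom q)) (Or (Box (Atom p)) (Box (Atom q))))"
  shows "(\<forall>M :: ('w, 'a) model. is_model M \<longrightarrow> (\<forall>w \<in> fst M. usat M w \<phi>))
       \<and> (\<exists>M :: (nat, 'a) model. is_model M \<and> is_S5 M \<and> (\<exists>w \<in> fst M. \<not> dsat M w \<phi>))
       \<and> logic_u TYPE(nat) False \<noteq> (logic_d TYPE(nat) False :: 'a fm set)
       \<and> logic_u TYPE(nat) True \<noteq> (logic_d TYPE(nat) True :: 'a fm set)"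
proof -
  have \<phi>: "\<phi> = box_conj_update_formula p q"
    by (simp add: \<phi>_def box_conj_update_formula_def)
  have valid: "\<forall>w \<in> fst M. usat M w \<phi>" if "is_model M" for M :: "('x, 'a) model"
    using usat_box_conj_update_formula[OF \<open>p \<noteq> q\<close> that] by (simp add: \<phi>)
  have in_logic_u: "\<phi> \<in> logic_u TYPE(nat) s5" for s5
    using valid unfolding logic_u_def by blast
  have countermodel: "\<not> dsat (two_world_cluster :: (nat, 'a) model) 0 \<phi>"
    using not_dsat_box_conj_update_formula[OF \<open>p \<noteq> q\<close>] by (simp add: \<phi>)
  have world: "0 \<in> fst (two_world_cluster :: (nat, 'a) model)"
    by (simp add: two_world_cluster_def)
  show ?thesis
    using valid countermodel world is_model_two_world_cluster is_S5_two_world_cluster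
      logic_u_ne_logic_d[OF in_logic_u is_model_two_world_cluster _ world countermodel]
    by blast
qed

end
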